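(* Let $a=\{a_1,\dots,a_m\}$ be a set of positive integers and $n\ge 0$. There exist a function $P:\mathbb{Z}_{\ge 0}\to\mathbb{Q}$ and an integer $N$ such that for every $s\ge1$ and all integers $k_1,\dots,k_s\ge N$, the number of $n$-element independent sets of the disjoint union $\overline{F}(a,k_1)+\overline{F}(a,k_2)+\cdots+\overline{F}(a,k_s)$ equals $P(k_1+\cdots+k_s)$. In other words, this number depends only on $a$, $n$ and $\sum_ik_i$.
   Context: For a set $a=\{a_1,\dots,a_m\}$ of positive integers and a positive integer $k$, $F(a,k)$ is the simple graph with vertex set $\mathbb{Z}/k\mathbb{Z}$ in which distinct vertices $i,j$ are adjacent if and only if $i-j\equiv a_r\pmod k$ or $j-i\equiv a_r\pmod k$ for some $1\le r\le m$. $\overline{F}(a,k)$ is the graph obtained from $F(a,k)$ by adding $k$ new vertices $v'$, one for each vertex $v$ of $F(a,k)$, with a single new edge joining $v'$ to $v$ (so each new vertex has degree $1$). $G_1+\cdots+G_s$ denotes the disjoint union of graphs. An independent set is a set of vertices no two of which are adjacent. *)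

theory Defs
  imports Complex_Main "HOL-Number_Theory.Cong"
begin

text \<open>A simple graph: a vertex set together with a (symmetric, irreflexive) adjacency relation.\<close>
type_synonym 'v graph = "'v set \<times> ('v \<Rightarrow> 'v \<Rightarrow> bool)"

definition verts :: "'v graph \<Rightarrow> 'v set" where "verts G = fst G"
definition adj :: "'v graph \<Rightarrow> 'v \<Rightarrow> 'v \<Rightarrow> bool" where "adj G = snd G"

text \<open>F(a,k): vertex set Z/kZ represented by {0..<k}; distinct i j adjacent iff
  i - j = a_r or j - i = a_r (mod k) for some r.\<close>
definition F :: "nat set \<Rightarrow> nat \<Rightarrow> nat graph" where
  "F a k = ({0..<k}, \<lambda>i j. i \<noteq> j \<and>
      (\<exists>r\<in>a. [int i - int j = int r] (mod int k) \<or> [int j - int i = int r] (mod int k)))"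

text \<open>Fbar G: add a pendant vertex (v, True) for every vertex v = (v, False).\<close>
definition Fbar :: "'v graph \<Rightarrow> ('v \<times> bool) graph" where
  "Fbar G = (verts G \<times> UNIV, \<lambda>(u,b) (v,c).
      (\<not> b \<and> \<not> c \<and> adj G u v) \<or> (u = v \<and> b \<noteq> c))"

definition disj_union :: "(nat \<Rightarrow> 'v graph) \<Rightarrow> nat \<Rightarrow> (nat \<times> 'v) graph" where
  "disj_union G s = (SIGMA t:{..<s}. verts (G t),
      \<lambda>(t,u) (t',v). t = t' \<and> adj (G t) u v)"

definition independent_set :: "'v graph \<Rightarrow> 'v set \<Rightarrow> bool" where
  "independent_set G S \<longleftrightarrow> S \<subseteq> verts G \<and> (\<forall>x\<in>S. \<forall>y\<in>S. \<not> adj G x y)"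

definition num_indep :: "'v graph \<Rightarrow> nat \<Rightarrow> nat" where
  "num_indep G n = card {S. independent_set G S \<and> card S = n}"

end

theory Submission
  imports Defs
begin

text \<open>
  By inclusion-exclusion over the vertices of a set W, the number of independent m-sets avoiding
  W is the total number I(m) of independent m-sets plus a signed sum of numbers of smaller
  independent sets avoiding closed neighbourhoods N[X] of independent X \<subseteq> W. Iterating this
  only explores a ball of radius about m around W. When all k_i are large, such balls in the
  components of the disjoint union look exactly like balls of the same graph built on \<int> instead
  of \<int>/k_i\<int>, so the number of independent m-sets avoiding N[v] is one fixed expression in
  I(0), ..., I(m-1), depending on v only through whether v is a pendant vertex. Counting the
  pairs (v, S) with v \<in> S gives (m+1) I(m+1) = (k_1 + ... + k_s) (E_0 + E_1), where E_0 and
  E_1 are those two expressions; this recurrence determines every I(m) from k_1 + ... + k_s.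
\<close>

section \<open>Inclusion-exclusion for independent sets\<close>

definition closed_nbhd :: "'v graph \<Rightarrow> 'v set \<Rightarrow> 'v set" where
  "closed_nbhd G X = X \<union> {w \<in> verts G. \<exists>x\<in>X. adj G x w}"

definition indep_avoiding :: "'v graph \<Rightarrow> 'v set \<Rightarrow> nat \<Rightarrow> 'v set set" where
  "indep_avoiding G W m = {S. independent_set G S \<and> card S = m \<and> S \<inter> W = {}}"

lemma closed_nbhd_mono: "X \<subseteq> Y \<Longrightarrow> closed_nbhd G X \<subseteq> closed_nbhd G Y"
  by (auto simp: closed_nbhd_def)

lemma finite_indep_sets: "finite (verts G) \<Longrightarrow> finite {S. independent_set G S \<and> P S}"
  by (rule finite_subset[of _ "Pow (verts G)"]) (auto simp: independent_set_def)

lemma finite_independent_set: "finite (verts G) \<Longrightarrow> independent_set G S \<Longrightarrow> finite S"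
  by (auto simp: independent_set_def intro: finite_subset)

lemma independent_set_subset: "independent_set G S \<Longrightarrow> T \<subseteq> S \<Longrightarrow> independent_set G T"
  by (auto simp: independent_set_def)

lemma num_indep_0:
  assumes "finite (verts G)"
  shows "num_indep G 0 = 1"
proof -
  have "{S. independent_set G S \<and> card S = 0} = {{}}"
  proof (intro equalityI subsetI)
    fix S assume "S \<in> {S. independent_set G S \<and> card S = 0}"
    with finite_independent_set[OF assms] show "S \<in> {{}}" by auto
  qed (simp add: independent_set_def)
  then show ?thesis
    by (simp add: num_indep_def)
qed

lemma card_indep_supersets:
  assumes fin: "finite (verts G)" and sym: "\<And>x y. adj G x y = adj G y x"
    and X: "independent_set G X" and card_X: "card X \<le> m"
  shows "card {S. independent_set G S \<and> card S = m \<and> X \<subseteq> S}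
       = card (indep_avoiding G (closed_nbhd G X) (m - card X))"
proof -
  have fin_X: "finite X"
    using fin X by (rule finite_independent_set)
  have "bij_betw (\<lambda>S. S - X) {S. independent_set G S \<and> card S = m \<and> X \<subseteq> S}
          (indep_avoiding G (closed_nbhd G X) (m - card X))"
  proof (rule bij_betw_byWitness[where f' = "\<lambda>T. T \<union> X"])
    show "(\<lambda>S. S - X) ` {S. independent_set G S \<and> card S = m \<and> X \<subseteq> S}
        \<subseteq> indep_avoiding G (closed_nbhd G X) (m - card X)"
    proof clarify
      fix S assume S: "independent_set G S" "m = card S" "X \<subseteq> S"
      then have "finite S" using fin finite_independent_set by blast
      with S fin_X show "S - X \<in> indep_avoiding G (closed_nbhd G X) (card S - card X)"
        by (auto simp: indep_avoiding_def closed_nbhd_def independent_set_def card_Diff_subset)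
    qed
    show "(\<lambda>T. T \<union> X) ` indep_avoiding G (closed_nbhd G X) (m - card X)
        \<subseteq> {S. independent_set G S \<and> card S = m \<and> X \<subseteq> S}"
    proof clarify
      fix T assume "T \<in> indep_avoiding G (closed_nbhd G X) (m - card X)"
      then have T: "independent_set G T" "card T = m - card X" "T \<inter> closed_nbhd G X = {}"
        by (auto simp: indep_avoiding_def)
      then have "finite T" using fin finite_independent_set by blast
      have no_edge: "\<not> adj G x w" if "x \<in> X" "w \<in> T" for x w
        using T(1,3) that unfolding closed_nbhd_def independent_set_def by blast
      have "independent_set G (T \<union> X)"
        using T(1) X no_edge sym unfolding independent_set_def by blast
      moreover have "card (T \<union> X) = m"
        using T \<open>finite T\<close> fin_X card_X by (subst card_Un_disjoint) (auto simp: closed_nbhd_def)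
      ultimately show "independent_set G (T \<union> X) \<and> card (T \<union> X) = m \<and> X \<subseteq> T \<union> X"
        by simp
    qed
  qed (auto simp: indep_avoiding_def closed_nbhd_def)
  then show ?thesis by (rule bij_betw_same_card)
qed

lemma sum_Pow_minus_one_power:
  "finite B \<Longrightarrow> B \<noteq> {} \<Longrightarrow> (\<Sum>X\<in>Pow B. (-1::'a::ring_1) ^ card X) = 0"
  by (rule sum_alternating_cancels) (use card_subsupersets_even_odd[of B "{}"] in \<open>auto simp: Pow_def\<close>)

lemma card_indep_avoiding_recurrence:
  assumes fin: "finite (verts G)" and sym: "\<And>x y. adj G x y = adj G y x" and fin_W: "finite W"
  shows "(of_nat (card (indep_avoiding G W m)) :: 'a::comm_ring_1) = of_nat (num_indep G m)
     + (\<Sum>X | X \<subseteq> W \<and> 0 < card X \<and> card X \<le> m \<and> independent_set G X.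
          (-1) ^ card X * of_nat (card (indep_avoiding G (closed_nbhd G X) (m - card X))))"
    (is "_ = _ + sum ?f ?XX")
proof -
  define TT where "TT = {S. independent_set G S \<and> card S = m}"
  define g where "g X = of_nat (card {S \<in> TT. X \<subseteq> S}) * (-1::'a) ^ card X" for X
  have fin_TT: "finite TT"
    unfolding TT_def using fin by (rule finite_indep_sets)
  have "(of_nat (card (indep_avoiding G W m)) :: 'a) = (\<Sum>S\<in>TT. if S \<inter> W = {} then 1 else 0)"
    using fin_TT by (simp add: sum.If_cases indep_avoiding_def TT_def Collect_conj_eq[symmetric] conj_assoc)
  also have "\<dots> = (\<Sum>S\<in>TT. \<Sum>X\<in>{X \<in> Pow W. X \<subseteq> S}. (-1) ^ card X)"
  proof (rule sum.cong[OF refl])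
    fix S
    have "{X \<in> Pow W. X \<subseteq> S} = Pow (S \<inter> W)" by auto
    then show "(if S \<inter> W = {} then 1 else 0) = (\<Sum>X\<in>{X \<in> Pow W. X \<subseteq> S}. (-1::'a) ^ card X)"
      using fin_W by (simp add: sum_Pow_minus_one_power del: Pow_Int_eq)
  qed
  also have "\<dots> = (\<Sum>X\<in>Pow W. \<Sum>S\<in>{S \<in> TT. X \<subseteq> S}. (-1) ^ card X)"
    by (rule sum.swap_restrict[OF fin_TT, of "Pow W" "\<lambda>S X. (-1) ^ card X" "\<lambda>S X. X \<subseteq> S"])
      (use fin_W in simp)
  also have "\<dots> = (\<Sum>X\<in>Pow W. g X)"
    by (simp add: g_def)
  also have "\<dots> = g {} + (\<Sum>X\<in>Pow W - {{}}. g X)"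
    using fin_W by (subst sum.remove[of _ "{}"]) auto
  also have "(\<Sum>X\<in>Pow W - {{}}. g X) = sum g ?XX"
  proof (rule sum.mono_neutral_right)
    show "\<forall>X\<in>Pow W - {{}} - ?XX. g X = 0"
    proof
      fix X assume X: "X \<in> Pow W - {{}} - ?XX"
      then have "0 < card X" using fin_W finite_subset by fastforce
      have "{S \<in> TT. X \<subseteq> S} = {}"
      proof (rule ccontr)
        assume "{S \<in> TT. X \<subseteq> S} \<noteq> {}"
        then obtain S where S: "independent_set G S" "card S = m" "X \<subseteq> S"
          unfolding TT_def by blast
        then have "finite S"
          using fin finite_independent_set by blast
        have "independent_set G X" using independent_set_subset S(1,3) .
        moreover have "card X \<le> m" using card_mono[OF \<open>finite S\<close> S(3)] S(2) by simp
        ultimately have "X \<in> ?XX" using X \<open>0 < card X\<close> by simp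
        with X show False by blast
      qed
      then show "g X = 0" unfolding g_def by (simp only: card.empty) simp
    qed
  qed (use fin_W in auto)
  also have "sum g ?XX = sum ?f ?XX"
    by (rule sum.cong[OF refl])
      (simp add: g_def TT_def conj_assoc card_indep_supersets[OF fin sym])
  finally show ?thesis
    by (simp add: g_def TT_def num_indep_def)
qed

lemma sum_card_indep_containing:
  assumes fin: "finite (verts G)"
  shows "(\<Sum>v\<in>verts G. card {S. independent_set G S \<and> card S = m \<and> v \<in> S}) = m * num_indep G m"
proof -
  define TT where "TT = {S. independent_set G S \<and> card S = m}"
  have fin_TT: "finite TT"
    unfolding TT_def using fin by (rule finite_indep_sets)
  have "(\<Sum>v\<in>verts G. card {S. independent_set G S \<and> card S = m \<and> v \<in> S})
      = (\<Sum>v\<in>verts G. \<Sum>S\<in>{S \<in> TT. v \<in> S}. 1)"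
    by (simp add: TT_def conj_assoc)
  also have "\<dots> = (\<Sum>S\<in>TT. \<Sum>v\<in>{v \<in> verts G. v \<in> S}. 1)"
    by (rule sum.swap_restrict[OF fin fin_TT])
  also have "\<dots> = (\<Sum>S\<in>TT. m)"
    by (rule sum.cong[OF refl]) (auto simp: TT_def independent_set_def Int_absorb1 Collect_conj_eq)
  finally show ?thesis
    by (simp add: TT_def num_indep_def)
qed

lemma card_indep_containing_vertex:
  assumes "finite (verts G)" and "\<And>x y. adj G x y = adj G y x"
    and "v \<in> verts G" and "\<not> adj G v v"
  shows "card {S. independent_set G S \<and> card S = Suc m \<and> v \<in> S}
       = card (indep_avoiding G (closed_nbhd G {v}) m)"
  using card_indep_supersets[OF assms(1,2), of "{v}" "Suc m"] assms(3,4)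
  by (simp add: independent_set_def)

section \<open>Graphs with a local model\<close>

text \<open>The expansion of card_indep_avoiding_recurrence, carried out in a model graph M with the
  global counts I(0), I(1), ... supplied as z.\<close>

function ie_count :: "'m graph \<Rightarrow> (nat \<Rightarrow> 'a::comm_ring_1) \<Rightarrow> 'm set \<Rightarrow> nat \<Rightarrow> 'a" where
  "ie_count M z W m = z m + (\<Sum>X | X \<subseteq> W \<and> 0 < card X \<and> card X \<le> m \<and> independent_set M X.
      (-1) ^ card X * ie_count M z (closed_nbhd M X) (m - card X))"
  by pat_completeness auto
termination by (relation "measure (\<lambda>(M, z, W, m). m)") auto

declare ie_count.simps [simp del]

lemma ie_count_cong:
  assumes "\<And>i. i \<le> m \<Longrightarrow> z i = z' i"
  shows "ie_count M z W m = ie_count M z' W m"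
  using assms
proof (induction M z W m rule: ie_count.induct)
  case (1 M z W m)
  show ?case
    by (subst (1 2) ie_count.simps) (use 1 in \<open>auto intro!: sum.cong\<close>)
qed

text \<open>B r plays the role of the ball of radius r around a root of M.\<close>

locale local_model =
  fixes G :: "'v graph" and M :: "'m graph" and e :: "'m \<Rightarrow> 'v" and B :: "nat \<Rightarrow> 'm set"
    and n :: nat
  assumes finite_verts: "finite (verts G)"
    and adj_sym: "adj G x y = adj G y x"
    and B_mono: "r \<le> r' \<Longrightarrow> B r \<subseteq> B r'"
    and closed_nbhd_B: "closed_nbhd M (B r) \<subseteq> B (Suc r)"
    and B_verts: "B (Suc n) \<subseteq> verts M"
    and emb_verts: "p \<in> B (Suc n) \<Longrightarrow> e p \<in> verts G"
    and inj_emb: "inj_on e (B (Suc n))"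
    and adj_emb: "p \<in> B (Suc n) \<Longrightarrow> q \<in> B (Suc n) \<Longrightarrow> adj G (e p) (e q) = adj M p q"
    and nbhd_emb: "p \<in> B n \<Longrightarrow> w \<in> verts G \<Longrightarrow> adj G (e p) w \<Longrightarrow> \<exists>q\<in>verts M. adj M p q \<and> w = e q"
begin

lemma independent_set_emb:
  assumes "X \<subseteq> B (Suc n)"
  shows "independent_set G (e ` X) \<longleftrightarrow> independent_set M X"
proof -
  have "X \<subseteq> verts M" and "e ` X \<subseteq> verts G"
    using assms B_verts emb_verts by auto
  moreover have "(\<forall>x\<in>e ` X. \<forall>y\<in>e ` X. \<not> adj G x y) \<longleftrightarrow> (\<forall>p\<in>X. \<forall>q\<in>X. \<not> adj M p q)"
  proof -
    have "\<forall>p\<in>X. \<forall>q\<in>X. adj G (e p) (e q) = adj M p q"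
      using assms adj_emb by blast
    then show ?thesis by auto
  qed
  ultimately show ?thesis
    unfolding independent_set_def by blast
qed

lemma closed_nbhd_emb:
  assumes X: "X \<subseteq> B n"
  shows "closed_nbhd G (e ` X) = e ` closed_nbhd M X"
proof
  have X': "X \<subseteq> B (Suc n)"
    using X B_mono[of n "Suc n"] by auto
  show "closed_nbhd G (e ` X) \<subseteq> e ` closed_nbhd M X"
    using X nbhd_emb unfolding closed_nbhd_def by blast
  have "closed_nbhd M X \<subseteq> B (Suc n)"
    using closed_nbhd_mono[OF X] closed_nbhd_B by blast
  then show "e ` closed_nbhd M X \<subseteq> closed_nbhd G (e ` X)"
    using X' emb_verts adj_emb unfolding closed_nbhd_def by blast
qed

lemma card_indep_avoiding_emb:
  "m \<le> n \<Longrightarrow> W \<subseteq> B (Suc n - m) \<Longrightarrow>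
    of_nat (card (indep_avoiding G (e ` W) m)) = ie_count M (\<lambda>i. of_nat (num_indep G i)) W m"
proof (induction m arbitrary: W rule: less_induct)
  \<comment> \<open>Each expansion step adds one neighbourhood layer to W and lowers m by at least one.\<close>
  case (less m)
  let ?z = "\<lambda>i. of_nat (num_indep G i) :: 'a"
  let ?XX = "{X. X \<subseteq> W \<and> 0 < card X \<and> card X \<le> m \<and> independent_set M X}"
  let ?YY = "{Y. Y \<subseteq> e ` W \<and> 0 < card Y \<and> card Y \<le> m \<and> independent_set G Y}"
  have W: "W \<subseteq> B (Suc n)"
    using less.prems(2) B_mono[of "Suc n - m" "Suc n"] by auto
  have inj_W: "inj_on e W"
    using inj_emb W by (rule inj_on_subset)
  have fin_eW: "finite (e ` W)"
    using W emb_verts finite_verts finite_subset[of "e ` W" "verts G"] by blast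
  have card_eX: "card (e ` X) = card X" if "X \<subseteq> W" for X
    using inj_W that by (meson card_image inj_on_subset)
  have YY: "?YY = image e ` ?XX"
  proof
    show "?YY \<subseteq> image e ` ?XX"
    proof
      fix Y assume Y: "Y \<in> ?YY"
      then obtain X where "X \<subseteq> W" "Y = e ` X"
        by (auto simp: subset_image_iff)
      with Y W show "Y \<in> image e ` ?XX"
        using card_eX independent_set_emb by auto
    qed
    show "image e ` ?XX \<subseteq> ?YY"
      using W card_eX independent_set_emb by auto
  qed
  have inj_XX: "inj_on (image e) ?XX"
    using inj_on_image_Pow[OF inj_W] by (rule inj_on_subset) auto
  have step: "of_nat (card (indep_avoiding G (closed_nbhd G (e ` X)) (m - card X)))
      = ie_count M ?z (closed_nbhd M X) (m - card X)" if X: "X \<in> ?XX" for X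
  proof -
    have "Suc n - m \<le> n" using X by auto
    then have "X \<subseteq> B n"
      using X less.prems(2) B_mono by blast
    then have nbhd: "closed_nbhd G (e ` X) = e ` closed_nbhd M X"
      by (rule closed_nbhd_emb)
    have "closed_nbhd M X \<subseteq> B (Suc (Suc n - m))"
      using closed_nbhd_mono[of X "B (Suc n - m)" M] X less.prems(2) closed_nbhd_B by blast
    also have "\<dots> \<subseteq> B (Suc n - (m - card X))"
      using X less.prems(1) by (intro B_mono) auto
    finally show ?thesis
      unfolding nbhd using X less.prems(1) by (intro less.IH) auto
  qed
  have "(of_nat (card (indep_avoiding G (e ` W) m)) :: 'a) = ?z m
      + (\<Sum>Y\<in>?YY. (-1) ^ card Y * of_nat (card (indep_avoiding G (closed_nbhd G Y) (m - card Y))))"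
    by (rule card_indep_avoiding_recurrence[OF finite_verts adj_sym fin_eW])
  also have "\<dots> = ?z m
      + (\<Sum>X\<in>?XX. (-1) ^ card X * of_nat (card (indep_avoiding G (closed_nbhd G (e ` X)) (m - card X))))"
    unfolding YY using inj_XX card_eX by (simp add: sum.reindex)
  also have "\<dots> = ie_count M ?z W m"
    by (subst ie_count.simps) (simp add: step[symmetric])
  finally show ?case .
qed

end

section \<open>Local structure of the graphs F(a,k)\<close>

lemma cong_abs_less_imp_eq:
  fixes x y m :: int
  assumes "\<bar>x - y\<bar> < m" and "[x = y] (mod m)"
  shows "x = y"
proof (rule ccontr)
  assume "x \<noteq> y"
  moreover have "m dvd x - y"
    using assms(2) by (simp add: cong_iff_dvd_diff)
  ultimately have "\<bar>m\<bar> \<le> \<bar>x - y\<bar>"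
    by (intro dvd_imp_le_int) auto
  with assms(1) show False by simp
qed

text \<open>The covering map from \<int> onto \<int>/k\<int> = {0..<k} sending 0 to u.\<close>

definition wrap :: "nat \<Rightarrow> nat \<Rightarrow> int \<Rightarrow> nat" where
  "wrap k u x = nat ((int u + x) mod int k)"

lemma int_wrap: "0 < k \<Longrightarrow> int (wrap k u x) = (int u + x) mod int k"
  by (simp add: wrap_def)

lemma wrap_less: "0 < k \<Longrightarrow> wrap k u x < k"
  by (simp add: wrap_def nat_less_iff)

lemma cong_wrap_diff_iff:
  assumes "\<bar>x - y - d\<bar> < int k"
  shows "[int (wrap k u x) - int (wrap k u y) = d] (mod int k) \<longleftrightarrow> x - y = d"
proof -
  have "0 < k" using assms by linarith
  then have "[int (wrap k u x) - int (wrap k u y) = d] (mod int k) \<longleftrightarrow> [x - y = d] (mod int k)"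
    by (simp add: int_wrap cong_def mod_diff_eq)
  also have "\<dots> \<longleftrightarrow> x - y = d"
    using assms cong_abs_less_imp_eq by auto
  finally show ?thesis .
qed

lemma wrap_eq_iff:
  assumes "\<bar>x - y\<bar> < int k"
  shows "wrap k u x = wrap k u y \<longleftrightarrow> x = y"
  using cong_wrap_diff_iff[of x y 0 k u] assms by (auto simp: cong_def)

lemma wrap_add_eq:
  assumes "j < k" and "[int j - int (wrap k u x) = d] (mod int k)"
  shows "wrap k u (x + d) = j"
proof -
  have "0 < k" using assms(1) by simp
  then have "[int j - (int u + x) = d] (mod int k)"
    using assms(2) by (simp add: int_wrap cong_def mod_diff_right_eq)
  then have "[int j = int u + (x + d)] (mod int k)"
    by (simp add: cong_iff_dvd_diff algebra_simps)
  then show ?thesis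
    using assms(1) by (simp add: wrap_def cong_def)
qed

lemma verts_disj_union: "verts (disj_union G s) = (SIGMA t:{..<s}. verts (G t))"
  by (simp add: disj_union_def verts_def)

lemma adj_disj_union: "adj (disj_union G s) (t, u) (t', v) \<longleftrightarrow> t = t' \<and> adj (G t) u v"
  by (simp add: disj_union_def adj_def)

lemma verts_Fbar: "verts (Fbar G) = verts G \<times> UNIV"
  by (simp add: Fbar_def verts_def)

lemma adj_Fbar: "adj (Fbar G) (u, b) (v, c) \<longleftrightarrow> (\<not> b \<and> \<not> c \<and> adj G u v) \<or> (u = v \<and> b \<noteq> c)"
  by (simp add: Fbar_def adj_def)

lemma verts_F: "verts (F a k) = {0..<k}"
  by (simp add: F_def verts_def)

lemma adj_F: "adj (F a k) i j \<longleftrightarrow> i \<noteq> j \<and>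
    (\<exists>r\<in>a. [int i - int j = int r] (mod int k) \<or> [int j - int i = int r] (mod int k))"
  by (simp add: F_def adj_def)

lemma adj_F_sym: "adj (F a k) i j \<longleftrightarrow> adj (F a k) j i"
  by (auto simp: adj_F cong_sym_eq)

text \<open>F(a,k) with k = \<infinity>: every component of the disjoint union looks locally like
  Fbar (int_circulant a).\<close>

definition int_circulant :: "nat set \<Rightarrow> int graph" where
  "int_circulant a = (UNIV, \<lambda>x y. x \<noteq> y \<and> (\<exists>r\<in>a. x - y = int r \<or> y - x = int r))"

lemma verts_int_circulant: "verts (int_circulant a) = UNIV"
  by (simp add: int_circulant_def verts_def)

lemma adj_int_circulant: "adj (int_circulant a) x y \<longleftrightarrow> x \<noteq> y \<and> (\<exists>r\<in>a. x - y = int r \<or> y - x = int r)"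
  by (simp add: int_circulant_def adj_def)

lemma adj_F_wrap:
  assumes "\<forall>r\<in>a. r \<le> D" and "\<bar>x - y\<bar> + int D < int k"
  shows "adj (F a k) (wrap k u x) (wrap k u y) \<longleftrightarrow> adj (int_circulant a) x y"
proof -
  have "\<bar>x - y - int r\<bar> < int k" "\<bar>y - x - int r\<bar> < int k" if "r \<in> a" for r
    using that assms by force+
  moreover have "\<bar>x - y\<bar> < int k"
    using assms(2) by simp
  ultimately show ?thesis
    by (auto simp: adj_F adj_int_circulant wrap_eq_iff cong_wrap_diff_iff)
qed

lemma adj_F_wrapE:
  assumes "adj (F a k) (wrap k u x) j" and "j < k"
  obtains y where "adj (int_circulant a) x y" and "j = wrap k u y"
proof -
  obtain r where r: "r \<in> a" and ne: "wrap k u x \<noteq> j" and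
    "[int j - int (wrap k u x) = - int r] (mod int k) \<or> [int j - int (wrap k u x) = int r] (mod int k)"
    using assms(1) by (auto simp: adj_F cong_iff_dvd_diff dvd_diff_commute algebra_simps)
  then consider "wrap k u (x - int r) = j" | "wrap k u (x + int r) = j"
    using wrap_add_eq[OF assms(2)] by fastforce
  moreover have "r \<noteq> 0"
  proof
    assume "r = 0"
    from calculation ne show False by cases (simp_all add: \<open>r = 0\<close>)
  qed
  ultimately show thesis
    using r that[of "x - int r"] that[of "x + int r"] by cases (auto simp: adj_int_circulant)
qed

lemma finite_verts_disj_union_Fbar: "finite (verts (disj_union (\<lambda>i. Fbar (F a (k i))) s))"
  by (simp add: verts_disj_union verts_Fbar verts_F)

lemma adj_disj_union_Fbar_sym:
  "adj (disj_union (\<lambda>i. Fbar (F a (k i))) s) x y \<longleftrightarrow> adj (disj_union (\<lambda>i. Fbar (F a (k i))) s) y x"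
  by (cases x; cases y) (auto simp: adj_disj_union adj_Fbar adj_F_sym)

lemma adj_disj_union_Fbar_irrefl: "\<not> adj (disj_union (\<lambda>i. Fbar (F a (k i))) s) x x"
  by (cases x) (auto simp: adj_disj_union adj_Fbar adj_F)

definition strip :: "nat \<Rightarrow> nat \<Rightarrow> (int \<times> bool) set" where
  "strip D r = {p. \<bar>fst p\<bar> \<le> int (r * D)}"

lemma strip_mono:
  assumes "r \<le> r'"
  shows "strip D r \<subseteq> strip D r'"
proof -
  have "int (r * D) \<le> int (r' * D)"
    using mult_le_mono1[OF assms] by (simp only: of_nat_le_iff)
  then show ?thesis
    unfolding strip_def by (blast intro: order_trans)
qed

definition component_emb :: "(nat \<Rightarrow> nat) \<Rightarrow> nat \<Rightarrow> nat \<Rightarrow> int \<times> bool \<Rightarrow> nat \<times> nat \<times> bool" where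
  "component_emb k t u p = (t, wrap (k t) u (fst p), snd p)"

lemma closed_nbhd_strip:
  assumes "\<forall>r\<in>a. r \<le> D"
  shows "closed_nbhd (Fbar (int_circulant a)) (strip D r) \<subseteq> strip D (Suc r)"
proof
  fix q assume "q \<in> closed_nbhd (Fbar (int_circulant a)) (strip D r)"
  then obtain p where p: "p \<in> strip D r" and pq: "q = p \<or> adj (Fbar (int_circulant a)) p q"
    unfolding closed_nbhd_def by blast
  obtain x b y c where xy: "p = (x, b)" "q = (y, c)"
    by (cases p, cases q)
  have "\<bar>y - x\<bar> \<le> int D"
  proof (cases "y = x")
    case False
    with pq obtain r' where "r' \<in> a" "\<bar>y - x\<bar> = int r'"
      by (auto simp: xy adj_Fbar adj_int_circulant)
    with assms show ?thesis by simp
  qed simp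
  with p show "q \<in> strip D (Suc r)"
    by (simp add: strip_def xy)
qed

lemma local_model_component:
  assumes D: "\<forall>r\<in>a. r \<le> D" and t: "t < s" and k: "2 * int (Suc n * D) + int D < int (k t)"
  shows "local_model (disj_union (\<lambda>i. Fbar (F a (k i))) s) (Fbar (int_circulant a))
           (component_emb k t u) (strip D) n"
proof
  let ?G = "disj_union (\<lambda>i. Fbar (F a (k i))) s" and ?M = "Fbar (int_circulant a)"
    and ?e = "component_emb k t u"
  have k_pos: "0 < k t"
    using k by linarith
  have close: "\<bar>x - y\<bar> + int D < int (k t)" if "(x, b) \<in> strip D (Suc n)" "(y, c) \<in> strip D (Suc n)"
    for x y b c
    using that k by (simp add: strip_def)
  show "finite (verts ?G)"
    by (rule finite_verts_disj_union_Fbar)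
  show "adj ?G x y = adj ?G y x" for x y
    by (rule adj_disj_union_Fbar_sym)
  show "strip D r \<subseteq> strip D r'" if "r \<le> r'" for r r'
    by (rule strip_mono[OF that])
  show "closed_nbhd ?M (strip D r) \<subseteq> strip D (Suc r)" for r
    using D by (rule closed_nbhd_strip)
  show "strip D (Suc n) \<subseteq> verts ?M"
    by (simp add: verts_Fbar verts_int_circulant)
  show "?e p \<in> verts ?G" for p
    using t k_pos by (simp add: component_emb_def verts_disj_union verts_Fbar verts_F wrap_less)
  show "inj_on ?e (strip D (Suc n))"
  proof (rule inj_onI)
    fix p q assume "p \<in> strip D (Suc n)" "q \<in> strip D (Suc n)" "?e p = ?e q"
    then show "p = q"
      using close[of "fst p" "snd p" "fst q" "snd q"]
      by (cases p, cases q) (simp add: component_emb_def wrap_eq_iff)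
  qed
  show "adj ?G (?e p) (?e q) = adj ?M p q" if "p \<in> strip D (Suc n)" "q \<in> strip D (Suc n)" for p q
    using that close[of "fst p" "snd p" "fst q" "snd q"] adj_F_wrap[OF D, of "fst p" "fst q" "k t" u]
    by (cases p, cases q) (simp add: component_emb_def adj_disj_union adj_Fbar wrap_eq_iff)
  show "\<exists>q\<in>verts ?M. adj ?M p q \<and> w = ?e q" if "adj ?G (?e p) w" "w \<in> verts ?G" for p w
  proof -
    obtain x b where p: "p = (x, b)" by (cases p)
    obtain t' j c where w: "w = (t', j, c)" by (cases w)
    from that have t': "t' = t" and j: "j < k t"
      and adj_w: "(\<not> b \<and> \<not> c \<and> adj (F a (k t)) (wrap (k t) u x) j) \<or> (wrap (k t) u x = j \<and> b \<noteq> c)"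
      by (auto simp: p w component_emb_def adj_disj_union adj_Fbar verts_disj_union verts_Fbar verts_F)
    then consider y where "\<not> b" "\<not> c" "adj (int_circulant a) x y" "j = wrap (k t) u y"
      | "wrap (k t) u x = j" "b \<noteq> c"
      using adj_F_wrapE by metis
    then show ?thesis
    proof cases
      case 1
      then show ?thesis
        by (intro bexI[of _ "(y, c)"])
          (auto simp: p w t' component_emb_def adj_Fbar verts_Fbar verts_int_circulant)
    next
      case 2
      then show ?thesis
        by (intro bexI[of _ "(x, c)"])
          (auto simp: p w t' component_emb_def adj_Fbar verts_Fbar verts_int_circulant)
    qed
  qed
qed

section \<open>The recurrence for the number of independent sets\<close>

lemma card_indep_containing_eq_ie_count:
  fixes a :: "nat set" and k :: "nat \<Rightarrow> nat" and s :: nat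
  defines "G \<equiv> disj_union (\<lambda>i. Fbar (F a (k i))) s" and "M \<equiv> Fbar (int_circulant a)"
  assumes D: "\<forall>r\<in>a. r \<le> D" and m: "m < n" and k: "2 * int (Suc n * D) + int D < int (k t)"
    and t: "t < s" and u: "u < k t"
  shows "of_nat (card {S. independent_set G S \<and> card S = Suc m \<and> (t, u, b) \<in> S})
       = ie_count M (\<lambda>i. of_nat (num_indep G i)) (closed_nbhd M {(0, b)}) m"
proof -
  interpret L: local_model G M "component_emb k t u" "strip D" n
    unfolding G_def M_def using D t k by (rule local_model_component)
  have "(t, u, b) \<in> verts G"
    using t u by (simp add: G_def verts_disj_union verts_Fbar verts_F)
  moreover have "\<not> adj G (t, u, b) (t, u, b)"
    unfolding G_def by (rule adj_disj_union_Fbar_irrefl)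
  ultimately have "card {S. independent_set G S \<and> card S = Suc m \<and> (t, u, b) \<in> S}
      = card (indep_avoiding G (closed_nbhd G {(t, u, b)}) m)"
    by (rule card_indep_containing_vertex[OF L.finite_verts L.adj_sym])
  also have "{(t, u, b)} = component_emb k t u ` {(0, b)}"
    using u by (simp add: component_emb_def wrap_def)
  also have "closed_nbhd G (component_emb k t u ` {(0, b)}) = component_emb k t u ` closed_nbhd M {(0, b)}"
    by (rule L.closed_nbhd_emb) (simp add: strip_def)
  finally have "of_nat (card {S. independent_set G S \<and> card S = Suc m \<and> (t, u, b) \<in> S})
      = (of_nat (card (indep_avoiding G (component_emb k t u ` closed_nbhd M {(0, b)}) m)) :: 'a)"
    by simp
  also have "\<dots> = ie_count M (\<lambda>i. of_nat (num_indep G i)) (closed_nbhd M {(0, b)}) m"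
  proof (rule L.card_indep_avoiding_emb)
    have "closed_nbhd M {(0, b)} \<subseteq> closed_nbhd M (strip D 0)"
      by (rule closed_nbhd_mono) (simp add: strip_def)
    also have "\<dots> \<subseteq> strip D 1"
      using L.closed_nbhd_B by simp
    also have "\<dots> \<subseteq> strip D (Suc n - m)"
      using m by (intro strip_mono) simp
    finally show "closed_nbhd M {(0, b)} \<subseteq> strip D (Suc n - m)" .
  qed (use m in simp)
  finally show ?thesis .
qed

lemma num_indep_recurrence:
  fixes a :: "nat set" and k :: "nat \<Rightarrow> nat" and s :: nat
  defines "G \<equiv> disj_union (\<lambda>i. Fbar (F a (k i))) s" and "M \<equiv> Fbar (int_circulant a)"
  assumes D: "\<forall>r\<in>a. r \<le> D" and m: "m < n" and k: "\<forall>t<s. 2 * int (Suc n * D) + int D < int (k t)"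
  shows "(of_nat (Suc m) * of_nat (num_indep G (Suc m)) :: 'a::comm_ring_1)
       = of_nat (\<Sum>t<s. k t) *
         (\<Sum>b\<in>UNIV. ie_count M (\<lambda>i. of_nat (num_indep G i)) (closed_nbhd M {(0, b)}) m)"
proof -
  define h where "h b = ie_count M (\<lambda>i. of_nat (num_indep G i) :: 'a) (closed_nbhd M {(0, b)}) m" for b
  have "(of_nat (Suc m) * of_nat (num_indep G (Suc m)) :: 'a)
      = of_nat (\<Sum>v\<in>verts G. card {S. independent_set G S \<and> card S = Suc m \<and> v \<in> S})"
    unfolding of_nat_mult[symmetric] G_def
    by (simp only: sum_card_indep_containing[OF finite_verts_disj_union_Fbar])
  also have "\<dots> = (\<Sum>t<s. \<Sum>p\<in>{0..<k t} \<times> UNIV.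
      of_nat (card {S. independent_set G S \<and> card S = Suc m \<and> (t, p) \<in> S}))"
    by (subst sum.Sigma) (auto simp: G_def verts_disj_union verts_Fbar verts_F case_prod_beta)
  also have "\<dots> = (\<Sum>t<s. \<Sum>p\<in>{0..<k t} \<times> UNIV. h (snd p))"
  proof (intro sum.cong refl)
    fix t p assume "t \<in> {..<s}" "p \<in> {0..<k t} \<times> (UNIV :: bool set)"
    then have t: "t < s" and u: "fst p < k t" by auto
    show "of_nat (card {S. independent_set G S \<and> card S = Suc m \<and> (t, p) \<in> S}) = h (snd p)"
      using card_indep_containing_eq_ie_count[where k = k and t = t and b = "snd p", OF D m k[rule_format, OF t] t u]
      by (simp add: h_def G_def M_def)
  qed
  also have "\<dots> = (\<Sum>t<s. of_nat (k t) * (\<Sum>b\<in>UNIV. h b))"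
    by (simp add: sum.cartesian_product')
  also have "\<dots> = of_nat (\<Sum>t<s. k t) * (\<Sum>b\<in>UNIV. h b)"
    by (simp add: sum_distrib_right)
  finally show ?thesis
    by (simp add: h_def)
qed

text \<open>Solving num_indep_recurrence: indep_count_seq a K m i is the predicted number of
  independent i-sets for i \<le> m; the entries above m are junk.\<close>

primrec indep_count_seq :: "nat set \<Rightarrow> nat \<Rightarrow> nat \<Rightarrow> nat \<Rightarrow> rat" where
  "indep_count_seq a K 0 = (\<lambda>_. 1)"
| "indep_count_seq a K (Suc m) = (indep_count_seq a K m)(Suc m :=
     of_nat K / of_nat (Suc m) * (\<Sum>b\<in>UNIV. ie_count (Fbar (int_circulant a)) (indep_count_seq a K m)
                                     (closed_nbhd (Fbar (int_circulant a)) {(0, b)}) m))"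

lemma num_indep_eq_indep_count_seq:
  fixes a :: "nat set" and k :: "nat \<Rightarrow> nat" and s :: nat
  defines "G \<equiv> disj_union (\<lambda>i. Fbar (F a (k i))) s"
  assumes D: "\<forall>r\<in>a. r \<le> D" and k: "\<forall>t<s. 2 * int (Suc n * D) + int D < int (k t)"
  shows "m \<le> n \<Longrightarrow> i \<le> m \<Longrightarrow> of_nat (num_indep G i) = indep_count_seq a (\<Sum>t<s. k t) m i"
proof (induction m arbitrary: i)
  case 0
  then show ?case
    by (simp add: num_indep_0 G_def finite_verts_disj_union_Fbar)
next
  case (Suc m)
  let ?M = "Fbar (int_circulant a)"
  have IH: "of_nat (num_indep G i) = indep_count_seq a (\<Sum>t<s. k t) m i" if "i \<le> m" for i
    using Suc.IH Suc.prems(1) that by simp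
  show ?case
  proof (cases "i \<le> m")
    case True
    then show ?thesis by (simp add: IH)
  next
    case False
    then have i: "i = Suc m" using Suc.prems(2) by simp
    have "of_nat (Suc m) * (of_nat (num_indep G (Suc m)) :: rat) = of_nat (\<Sum>t<s. k t) *
        (\<Sum>b\<in>UNIV. ie_count ?M (\<lambda>i. of_nat (num_indep G i)) (closed_nbhd ?M {(0, b)}) m)"
      unfolding G_def using Suc.prems(1) by (intro num_indep_recurrence[OF D _ k]) simp
    also have "\<dots> = of_nat (\<Sum>t<s. k t) *
        (\<Sum>b\<in>UNIV. ie_count ?M (indep_count_seq a (\<Sum>t<s. k t) m) (closed_nbhd ?M {(0, b)}) m)"
      by (simp add: IH cong: ie_count_cong)
    finally show ?thesis
      unfolding i by (simp add: field_simps)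
  qed
qed

theorem corollary3p6:
  fixes a :: "nat set" and n :: nat
  assumes "finite a" and "\<forall>x\<in>a. x > 0"
  shows "\<exists>(P :: nat \<Rightarrow> rat) (N :: int). \<forall>s \<ge> 1. \<forall>k :: nat \<Rightarrow> nat.
           (\<forall>i<s. int (k i) \<ge> N) \<longrightarrow>
           of_nat (num_indep (disj_union (\<lambda>i. Fbar (F a (k i))) s) n) = P (\<Sum>i<s. k i)"
proof -
  \<comment> \<open>Any bound on a works; Max a would be junk for a = {}.\<close>
  define D where "D = \<Sum>a"
  have D: "\<forall>r\<in>a. r \<le> D"
    unfolding D_def using assms(1) by (auto intro: member_le_sum)
  have count: "of_nat (num_indep (disj_union (\<lambda>i. Fbar (F a (k i))) s) n)
      = indep_count_seq a (\<Sum>i<s. k i) n n"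
    if "\<forall>i<s. 2 * int (Suc n * D) + int D + 1 \<le> int (k i)" for s k
    using that unfolding add1_zle_eq by (rule num_indep_eq_indep_count_seq[OF D]) simp_all
  show ?thesis
    by (intro exI[of _ "\<lambda>K. indep_count_seq a K n n"] exI[of _ "2 * int (Suc n * D) + int D + 1"]
        allI impI) (rule count)
qed

end
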